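(* For a positive integer $N$ and integers $m,\ell$ with $m\equiv \ell\pmod 2$, define \[ S_{m,\ell}^{N}(q):=\frac{q^{-\frac{1}{8}+\frac{(\ell+1)^2}{4(N+2)}-\frac{m^2}{4N}}}{J_{1}^3}\, f_{1,1+N,1}\big(q^{1+\frac{1}{2}(m+\ell)},q^{1-\frac{1}{2}(m-\ell)},q\big). \] Then $S_{m,\ell}^{N}(q)=S_{-m,\ell}^{N}(q)$, $S_{m,\ell}^{N}(q)=S_{2N-m,\ell}^{N}(q)$, and $S_{m,\ell}^{N}(q)=S_{N-m,N-\ell}^{N}(q)$.
   Context: Let $q=e^{2\pi i\tau}$ with $\operatorname{Im}\tau>0$, and for real $\alpha$ put $q^{\alpha}:=e^{2\pi i\alpha\tau}$. $J_1:=\prod_{i\ge1}(1-q^i)$. For positive integers $a,b,c$ and $x,y\in\mathbb{C}^*$, the Hecke-type double-sum is $f_{a,b,c}(x,y,q):=\Big(\sum_{r,s\ge0}-\sum_{r,s<0}\Big)(-1)^{r+s}x^ry^sq^{a\binom{r}{2}+brs+c\binom{s}{2}}$. *)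

theory Defs
  imports "HOL-Analysis.Analysis"
begin

definition qpow :: "complex \<Rightarrow> real \<Rightarrow> complex" where
  "qpow \<tau> \<alpha> = exp (2 * of_real pi * \<i> * of_real \<alpha> * \<tau>)"

definition J1 :: "complex \<Rightarrow> complex" where
  "J1 \<tau> = (\<Prod>i. 1 - (qpow \<tau> 1) ^ Suc i)"

definition hecke_term :: "int \<Rightarrow> int \<Rightarrow> int \<Rightarrow> complex \<Rightarrow> complex \<Rightarrow> complex \<Rightarrow> int \<times> int \<Rightarrow> complex" where
  "hecke_term a b c x y q = (\<lambda>(r, s). (-1) powi (r + s) * x powi r * y powi s *
      q powi (a * (r * (r - 1) div 2) + b * r * s + c * (s * (s - 1) div 2)))"

definition hecke_f :: "int \<Rightarrow> int \<Rightarrow> int \<Rightarrow> complex \<Rightarrow> complex \<Rightarrow> complex \<Rightarrow> complex" where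
  "hecke_f a b c x y q =
     infsum (hecke_term a b c x y q) {(r, s). r \<ge> 0 \<and> s \<ge> 0}
   - infsum (hecke_term a b c x y q) {(r, s). r < 0 \<and> s < 0}"

definition S_fun :: "nat \<Rightarrow> int \<Rightarrow> int \<Rightarrow> complex \<Rightarrow> complex" where
  "S_fun N m l \<tau> =
     qpow \<tau> (- 1/8 + (of_int l + 1)^2 / (4 * (of_nat N + 2)) - (of_int m)^2 / (4 * of_nat N))
     / (J1 \<tau>) ^ 3
     * hecke_f 1 (1 + int N) 1
         (qpow \<tau> (1 + (of_int m + of_int l) / 2))
         (qpow \<tau> (1 - (of_int m - of_int l) / 2))
         (qpow \<tau> 1)"

end

theory Submission
  imports Defs
begin

text \<open>For integers \<open>A, B\<close> put \<open>F(A, B) = f\<^sub>1\<^sub>,\<^sub>b\<^sub>,\<^sub>1(q\<^sup>1\<^sup>+\<^sup>A, q\<^sup>1\<^sup>+\<^sup>B, q)\<close>; then \<open>S\<^sub>m\<^sub>,\<^sub>l\<close> is a power of \<open>q\<close>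
  times \<open>F(A, B)\<close> with \<open>b = N + 1\<close>, \<open>m = A - B\<close>, \<open>l = A + B\<close>, and the three identities reduce
  to functional equations of \<open>F\<close>. Exchanging \<open>r\<close> and \<open>s\<close> gives \<open>F(A, B) = F(B, A)\<close>.
  The substitution \<open>(r, s) \<mapsto> (-1 - r, -1 - s)\<close> exchanges the two cones of the double sum and
  gives \<open>F(A, B) = -q\<^sup>b\<^sup>-\<^sup>A\<^sup>-\<^sup>B F(b - A, b - B)\<close>. The shift \<open>r \<mapsto> r + 1\<close> gives
  \<open>F(A, B) = -q\<^sup>A\<^sup>+\<^sup>1 F(A + 1, B + b)\<close>: the cones only change along the line \<open>r = 0\<close>, and the
  sum of the summands over that whole line vanishes, because they cancel in pairs under
  \<open>s \<mapsto> -2B - 1 - s\<close>. Combining the shift with the swap, resp. with the inversion, yields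
  \<open>m \<mapsto> 2N - m\<close>, resp. \<open>(m, l) \<mapsto> (N - m, N - l)\<close>, and the powers of \<open>q\<close> that appear are
  exactly absorbed by the prefactor.\<close>

lemma summable_on_int_geometric:
  fixes \<rho> :: real
  assumes "0 \<le> \<rho>" "\<rho> < 1"
  shows "(\<lambda>r::int. \<rho> ^ nat \<bar>r\<bar>) summable_on UNIV"
proof -
  let ?f = "\<lambda>r::int. \<rho> ^ nat \<bar>r\<bar>"
  have geom: "(\<lambda>n::nat. \<rho> ^ n) summable_on UNIV"
    by (rule norm_summable_imp_summable_on) (use assms in \<open>simp add: summable_geometric\<close>)
  have "bij_betw int UNIV {r::int. 0 \<le> r}"
    by (rule bij_betw_byWitness[where f'=nat]) auto
  then have nonneg: "?f summable_on {r. 0 \<le> r}"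
    using summable_on_reindex_bij_betw[of int UNIV _ ?f] geom by simp
  have "bij_betw (\<lambda>n::nat. - int n - 1) UNIV {r::int. r < 0}"
    by (rule bij_betw_byWitness[where f'="\<lambda>r. nat (- r - 1)"]) auto
  moreover have "?f (- int n - 1) = \<rho> * \<rho> ^ n" for n :: nat
    by (simp add: nat_add_distrib)
  ultimately have neg: "?f summable_on {r. r < 0}"
    using summable_on_reindex_bij_betw[of "\<lambda>n::nat. - int n - 1" UNIV _ ?f]
          summable_on_cmult_right[OF geom, of \<rho>] by simp
  have "?f summable_on ({r. 0 \<le> r} \<union> {r. r < 0})"
    by (rule summable_on_Un_disjoint[OF nonneg neg]) auto
  moreover have "{r::int. 0 \<le> r} \<union> {r. r < 0} = UNIV"
    by auto
  ultimately show ?thesis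
    by simp
qed

lemma summable_on_int_pair_geometric:
  fixes \<rho> :: real
  assumes "0 \<le> \<rho>" "\<rho> < 1"
  shows "(\<lambda>p::int \<times> int. \<rho> ^ nat \<bar>fst p\<bar> * \<rho> ^ nat \<bar>snd p\<bar>) summable_on UNIV"
proof -
  let ?a = "\<lambda>r::int. \<rho> ^ nat \<bar>r\<bar>"
  have a: "?a summable_on UNIV"
    by (rule summable_on_int_geometric[OF assms])
  have "(\<lambda>p. ?a (fst p) * ?a (snd p)) summable_on Sigma UNIV (\<lambda>_. UNIV)"
  proof (rule summable_on_SigmaI[where g="\<lambda>r. ?a r * infsum ?a UNIV"])
    show "((\<lambda>s. ?a (fst (r, s)) * ?a (snd (r, s))) has_sum ?a r * infsum ?a UNIV) UNIV" for r
      using has_sum_cmult_right[OF has_sum_infsum[OF a], of "?a r"] by simp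
    show "(\<lambda>r. ?a r * infsum ?a UNIV) summable_on UNIV"
      using a by (rule summable_on_cmult_left)
    show "0 \<le> ?a (fst (r, s)) * ?a (snd (r, s))" for r s
      using assms by simp
  qed
  then show ?thesis
    by simp
qed

lemma summable_on_int_pair_geometric_bound:
  fixes f :: "int \<times> int \<Rightarrow> complex" and \<rho> K :: real
  assumes "0 \<le> \<rho>" "\<rho> < 1"
    and "\<And>p. p \<in> S \<Longrightarrow> norm (f p) \<le> K * (\<rho> ^ nat \<bar>fst p\<bar> * \<rho> ^ nat \<bar>snd p\<bar>)"
  shows "f summable_on S"
proof -
  have "(\<lambda>p. K * (\<rho> ^ nat \<bar>fst p\<bar> * \<rho> ^ nat \<bar>snd p\<bar>)) summable_on (UNIV :: (int \<times> int) set)"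
    by (rule summable_on_cmult_right[OF summable_on_int_pair_geometric[OF assms(1,2)]])
  then have "(\<lambda>p. K * (\<rho> ^ nat \<bar>fst p\<bar> * \<rho> ^ nat \<bar>snd p\<bar>)) summable_on S"
    by (rule summable_on_subset_banach) auto
  then have "(\<lambda>p. norm (f p)) summable_on S"
    by (rule summable_on_comparison_test) (use assms in auto)
  then show ?thesis
    using summable_on_iff_abs_summable_on_complex by blast
qed

lemma int_mult_pred_nonneg: "0 \<le> (u::int) * (u - 1)"
  by (cases "u \<le> 0") (auto intro: mult_nonpos_nonpos)

lemma int_quadratic_ge_abs:
  "2 * \<bar>r\<bar> - 2 * (A\<^sup>2 + (A + 2)\<^sup>2) \<le> r * (r - 1) + 2 * (1 + A) * (r::int)"
proof -
  have "0 \<le> r * (r - 1) + 2 * (1 + A) * r - (2 * \<bar>r\<bar> - 2 * (A\<^sup>2 + (A + 2)\<^sup>2))"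
  proof (cases "0 \<le> r")
    case True
    then have eq: "r * (r - 1) + 2 * (1 + A) * r - (2 * \<bar>r\<bar> - 2 * (A\<^sup>2 + (A + 2)\<^sup>2))
        = (r + A) * (r + A - 1) + (- A) * (- A - 1) + 2 * (A + 2)\<^sup>2"
      by (simp add: algebra_simps power2_eq_square)
    show ?thesis
      unfolding eq using int_mult_pred_nonneg[of "r + A"] int_mult_pred_nonneg[of "- A"]
      by (intro add_nonneg_nonneg) simp_all
  next
    case False
    then have eq: "r * (r - 1) + 2 * (1 + A) * r - (2 * \<bar>r\<bar> - 2 * (A\<^sup>2 + (A + 2)\<^sup>2))
        = (r + A + 2) * (r + A + 1) + (- A - 2) * (- A - 3) + 2 * A\<^sup>2"
      by (simp add: algebra_simps power2_eq_square)
    show ?thesis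
      unfolding eq using int_mult_pred_nonneg[of "r + A + 2"] int_mult_pred_nonneg[of "- A - 2"]
      by (intro add_nonneg_nonneg) (simp_all add: algebra_simps)
  qed
  then show ?thesis
    by simp
qed

definition hecke_exponent :: "int \<Rightarrow> int \<Rightarrow> int \<Rightarrow> int \<Rightarrow> int \<Rightarrow> int" where
  "hecke_exponent b A B r s =
     (1 + A) * r + (1 + B) * s + r * (r - 1) div 2 + b * r * s + s * (s - 1) div 2"

lemma two_hecke_exponent:
  "2 * hecke_exponent b A B r s = 2 * (1 + A) * r + 2 * (1 + B) * s + r * (r - 1) + 2 * (b * (r * s)) + s * (s - 1)"
proof -
  have "2 * (u * (u - 1) div 2) = u * (u - 1)" for u :: int
    by simp
  then show ?thesis
    unfolding hecke_exponent_def by (simp add: algebra_simps)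
qed

lemma hecke_exponent_lower_bound:
  assumes "0 \<le> b" "0 \<le> r * s"
  shows "\<bar>r\<bar> + \<bar>s\<bar> - (A\<^sup>2 + (A + 2)\<^sup>2 + B\<^sup>2 + (B + 2)\<^sup>2) \<le> hecke_exponent b A B r s"
proof -
  have "0 \<le> b * (r * s)"
    using assms by simp
  then show ?thesis
    using two_hecke_exponent[of b A B r s] int_quadratic_ge_abs[of r A] int_quadratic_ge_abs[of s B]
    by (simp add: algebra_simps)
qed

lemma hecke_exponent_shift:
  "hecke_exponent b A B (r + 1) s = (1 + A) + hecke_exponent b (A + 1) (B + b) r s"
proof -
  have "2 * hecke_exponent b A B (r + 1) s = 2 * ((1 + A) + hecke_exponent b (A + 1) (B + b) r s)"
    by (simp only: two_hecke_exponent distrib_left) (simp add: algebra_simps)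
  then show ?thesis
    by simp
qed

lemma hecke_exponent_inversion:
  "hecke_exponent b A B (-1 - r) (-1 - s) = (b - A - B) + hecke_exponent b (b - A) (b - B) r s"
proof -
  have "2 * hecke_exponent b A B (-1 - r) (-1 - s) = 2 * ((b - A - B) + hecke_exponent b (b - A) (b - B) r s)"
    by (simp only: two_hecke_exponent distrib_left) (simp add: algebra_simps)
  then show ?thesis
    by simp
qed

lemma hecke_exponent_swap: "hecke_exponent b A B s r = hecke_exponent b B A r s"
  unfolding hecke_exponent_def by (simp add: algebra_simps)

lemma hecke_exponent_axis_reflect:
  "hecke_exponent b A B 0 (-(2 * B + 1) - s) = hecke_exponent b A B 0 s"
proof -
  have "2 * hecke_exponent b A B 0 (-(2 * B + 1) - s) = 2 * hecke_exponent b A B 0 s"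
    by (simp only: two_hecke_exponent) (simp add: algebra_simps)
  then show ?thesis
    by simp
qed

definition hecke_summand :: "complex \<Rightarrow> int \<Rightarrow> int \<Rightarrow> int \<Rightarrow> int \<times> int \<Rightarrow> complex" where
  "hecke_summand z b A B p = (-1) powi (fst p + snd p) * z powi hecke_exponent b A B (fst p) (snd p)"

definition hecke_F :: "complex \<Rightarrow> int \<Rightarrow> int \<Rightarrow> int \<Rightarrow> complex" where
  "hecke_F z b A B = hecke_f 1 b 1 (z powi (1 + A)) (z powi (1 + B)) z"

lemma hecke_term_eq_hecke_summand:
  assumes "z \<noteq> 0"
  shows "hecke_term 1 b 1 (z powi (1 + A)) (z powi (1 + B)) z = hecke_summand z b A B"
proof
  fix p :: "int \<times> int"
  obtain r s where p: "p = (r, s)"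
    by (cases p)
  have "(z powi (1 + A)) powi r * (z powi (1 + B)) powi s *
        z powi (1 * (r * (r - 1) div 2) + b * r * s + 1 * (s * (s - 1) div 2))
      = z powi ((1 + A) * r) * z powi ((1 + B) * s) *
        z powi (r * (r - 1) div 2 + b * r * s + s * (s - 1) div 2)"
    by (simp add: power_int_mult)
  also have "\<dots> = z powi hecke_exponent b A B r s"
    unfolding hecke_exponent_def using assms by (simp add: power_int_add add.assoc)
  finally show "hecke_term 1 b 1 (z powi (1 + A)) (z powi (1 + B)) z p = hecke_summand z b A B p"
    unfolding hecke_term_def hecke_summand_def p by (simp add: mult.assoc)
qed

lemma hecke_F_eq:
  assumes "z \<noteq> 0"
  shows "hecke_F z b A B = infsum (hecke_summand z b A B) {(r, s). r \<ge> 0 \<and> s \<ge> 0}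
                         - infsum (hecke_summand z b A B) {(r, s). r < 0 \<and> s < 0}"
  unfolding hecke_F_def hecke_f_def hecke_term_eq_hecke_summand[OF assms] ..

lemma hecke_summand_shift:
  assumes "z \<noteq> 0"
  shows "hecke_summand z b A B (r + 1, s) = - (z powi (A + 1)) * hecke_summand z b (A + 1) (B + b) (r, s)"
proof -
  have "(-1::complex) powi (r + 1 + s) = - ((-1) powi (r + s))"
    by (simp add: power_int_minus_left)
  moreover have "z powi hecke_exponent b A B (r + 1) s
      = z powi (A + 1) * z powi hecke_exponent b (A + 1) (B + b) r s"
    unfolding hecke_exponent_shift using assms by (simp add: power_int_add add.commute)
  ultimately show ?thesis
    unfolding hecke_summand_def by simp
qed

lemma hecke_summand_inversion:
  assumes "z \<noteq> 0"
  shows "hecke_summand z b A B (-1 - r, -1 - s) = z powi (b - A - B) * hecke_summand z b (b - A) (b - B) (r, s)"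
proof -
  have "(-1::complex) powi (-1 - r + (-1 - s)) = (-1) powi (r + s)"
    by (simp add: power_int_minus_left)
  moreover have "z powi hecke_exponent b A B (-1 - r) (-1 - s)
      = z powi (b - A - B) * z powi hecke_exponent b (b - A) (b - B) r s"
    unfolding hecke_exponent_inversion using assms by (simp add: power_int_add)
  ultimately show ?thesis
    unfolding hecke_summand_def by simp
qed

lemma hecke_summand_swap: "hecke_summand z b A B (s, r) = hecke_summand z b B A (r, s)"
  unfolding hecke_summand_def by (simp add: hecke_exponent_swap add.commute)

lemma hecke_summand_axis_reflect:
  "hecke_summand z b A B (0, -(2 * B + 1) - s) = - hecke_summand z b A B (0, s)"
proof -
  have "(-1::complex) powi (-(2 * B + 1) - s) = - ((-1) powi s)"
    by (simp add: power_int_minus_left)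
  moreover note hecke_exponent_axis_reflect[of b A B s]
  ultimately show ?thesis
    unfolding hecke_summand_def by (simp del: minus_add_distrib)
qed

lemma hecke_summand_summable_on:
  assumes z: "z \<noteq> 0" "norm z < 1" and b: "0 \<le> b"
    and S: "S \<subseteq> {p. 0 \<le> fst p * snd p}"
  shows "hecke_summand z b A B summable_on S"
proof -
  define C where "C = A\<^sup>2 + (A + 2)\<^sup>2 + B\<^sup>2 + (B + 2)\<^sup>2"
  let ?\<rho> = "norm z"
  have \<rho>: "?\<rho> \<noteq> 0" "0 \<le> ?\<rho>" "?\<rho> \<le> 1"
    using z by auto
  have "norm (hecke_summand z b A B (r, s)) \<le> ?\<rho> powi (- C) * (?\<rho> ^ nat \<bar>r\<bar> * ?\<rho> ^ nat \<bar>s\<bar>)"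
    if "0 \<le> r * s" for r s
  proof -
    have "norm (hecke_summand z b A B (r, s)) = ?\<rho> powi hecke_exponent b A B r s"
      unfolding hecke_summand_def by (simp add: norm_mult norm_power_int)
    also have "\<dots> \<le> ?\<rho> powi (- C + \<bar>r\<bar> + \<bar>s\<bar>)"
      using hecke_exponent_lower_bound[OF b that, of A B] \<rho>
      by (intro power_int_decreasing) (auto simp: C_def)
    also have "\<dots> = ?\<rho> powi (- C) * (?\<rho> powi \<bar>r\<bar> * ?\<rho> powi \<bar>s\<bar>)"
      by (simp only: power_int_add[OF disjI1[OF \<rho>(1)]] mult.assoc)
    also have "\<dots> = ?\<rho> powi (- C) * (?\<rho> ^ nat \<bar>r\<bar> * ?\<rho> ^ nat \<bar>s\<bar>)"
      by (simp add: power_int_nonneg_exp)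
    finally show ?thesis .
  qed
  then show ?thesis
    using S z \<rho> by (intro summable_on_int_pair_geometric_bound[where \<rho>="?\<rho>" and K="?\<rho> powi (- C)"]) auto
qed

lemma hecke_summand_axis_sum: "infsum (hecke_summand z b A B) {(r, s). r = 0} = 0"
proof -
  let ?L = "{(r::int, s::int). r = 0}"
  let ?\<sigma> = "\<lambda>p::int \<times> int. (fst p, -(2 * B + 1) - snd p)"
  have "bij_betw ?\<sigma> ?L ?L"
    by (rule bij_betw_byWitness[where f'="?\<sigma>"]) auto
  then have "infsum (hecke_summand z b A B) ?L = infsum (\<lambda>p. hecke_summand z b A B (?\<sigma> p)) ?L"
    by (rule infsum_reindex_bij_betw[symmetric])
  also have "\<dots> = infsum (\<lambda>p. - hecke_summand z b A B p) ?L"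
  proof (rule infsum_cong)
    fix p assume "p \<in> ?L"
    then obtain s where "p = (0, s)"
      by auto
    then show "hecke_summand z b A B (?\<sigma> p) = - hecke_summand z b A B p"
      using hecke_summand_axis_reflect[of z b A B s] by simp
  qed
  also have "\<dots> = - infsum (hecke_summand z b A B) ?L"
    by (rule infsum_uminus)
  finally show ?thesis
    by simp
qed

lemma hecke_F_swap:
  assumes "z \<noteq> 0"
  shows "hecke_F z b A B = hecke_F z b B A"
proof -
  let ?sw = "\<lambda>p::int \<times> int. (snd p, fst p)"
  have "bij_betw ?sw {(r::int, s::int). r \<ge> 0 \<and> s \<ge> 0} {(r, s). r \<ge> 0 \<and> s \<ge> 0}"
       "bij_betw ?sw {(r::int, s::int). r < 0 \<and> s < 0} {(r, s). r < 0 \<and> s < 0}"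
    by (rule bij_betw_byWitness[where f'="?sw"]; auto)+
  moreover have "hecke_summand z b A B (?sw p) = hecke_summand z b B A p" for p
    by (cases p) (simp add: hecke_summand_swap)
  ultimately show ?thesis
    unfolding hecke_F_eq[OF assms]
    using infsum_reindex_bij_betw[of ?sw _ _ "hecke_summand z b A B"] by simp
qed

lemma hecke_F_inversion:
  assumes "z \<noteq> 0"
  shows "hecke_F z b A B = - (z powi (b - A - B)) * hecke_F z b (b - A) (b - B)"
proof -
  let ?iv = "\<lambda>p::int \<times> int. (-1 - fst p, -1 - snd p)"
  let ?P = "{(r::int, s::int). r \<ge> 0 \<and> s \<ge> 0}"
  let ?M = "{(r::int, s::int). r < 0 \<and> s < 0}"
  let ?G = "hecke_summand z b (b - A) (b - B)"
  have "bij_betw ?iv ?P ?M" "bij_betw ?iv ?M ?P"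
    by (rule bij_betw_byWitness[where f'="?iv"]; auto)+
  moreover have "hecke_summand z b A B (?iv p) = z powi (b - A - B) * ?G p" for p
    by (cases p) (simp add: hecke_summand_inversion[OF assms])
  ultimately have "infsum (hecke_summand z b A B) ?M = z powi (b - A - B) * infsum ?G ?P"
                  "infsum (hecke_summand z b A B) ?P = z powi (b - A - B) * infsum ?G ?M"
    using infsum_reindex_bij_betw[of ?iv _ _ "hecke_summand z b A B"]
    by (simp_all add: infsum_cmult_right')
  then show ?thesis
    unfolding hecke_F_eq[OF assms] by (simp add: algebra_simps)
qed

lemma hecke_F_shift:
  assumes z: "z \<noteq> 0" "norm z < 1" and b: "0 \<le> b"
  shows "hecke_F z b A B = - (z powi (A + 1)) * hecke_F z b (A + 1) (B + b)"
proof -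
  let ?sh = "\<lambda>p::int \<times> int. (fst p + 1, snd p)"
  let ?P = "{(r::int, s::int). r \<ge> 0 \<and> s \<ge> 0}"
  let ?M = "{(r::int, s::int). r < 0 \<and> s < 0}"
  let ?P1 = "{(r::int, s::int). r \<ge> 1 \<and> s \<ge> 0}"
  let ?M1 = "{(r::int, s::int). r < 1 \<and> s < 0}"
  let ?Lp = "{(r::int, s::int). r = 0 \<and> s \<ge> 0}"
  let ?Lm = "{(r::int, s::int). r = 0 \<and> s < 0}"
  let ?G = "hecke_summand z b A B"
  let ?G' = "hecke_summand z b (A + 1) (B + b)"
  have sum_split: "infsum ?G X = infsum ?G Y + infsum ?G Z"
    if "X = Y \<union> Z" "Y \<inter> Z = {}" "X \<subseteq> {p. 0 \<le> fst p * snd p}" for X Y Z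
    using that by (simp add: infsum_Un_disjoint hecke_summand_summable_on[OF z b])
  have "bij_betw ?sh ?P ?P1" "bij_betw ?sh ?M ?M1"
    by (rule bij_betw_byWitness[where f'="\<lambda>p. (fst p - 1, snd p)"]; auto)+
  moreover have "?G (?sh p) = - (z powi (A + 1)) * ?G' p" for p
    by (cases p) (simp add: hecke_summand_shift[OF z(1)])
  ultimately have shifted: "infsum ?G ?P1 = - (z powi (A + 1)) * infsum ?G' ?P"
                           "infsum ?G ?M1 = - (z powi (A + 1)) * infsum ?G' ?M"
    using infsum_reindex_bij_betw[of ?sh _ _ ?G]
    by (simp_all add: infsum_cmult_right' infsum_uminus)
  have "infsum ?G ?P = infsum ?G ?P1 + infsum ?G ?Lp"
       "infsum ?G ?M1 = infsum ?G ?M + infsum ?G ?Lm"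
       "infsum ?G {(r, s). r = 0} = infsum ?G ?Lp + infsum ?G ?Lm"
    by (rule sum_split; auto simp: zero_le_mult_iff)+
  moreover have "infsum ?G {(r, s). r = 0} = 0"
    by (rule hecke_summand_axis_sum)
  ultimately have "hecke_F z b A B = infsum ?G ?P1 - infsum ?G ?M1"
    unfolding hecke_F_eq[OF z(1)] by algebra
  also have "\<dots> = - (z powi (A + 1)) * hecke_F z b (A + 1) (B + b)"
    unfolding shifted hecke_F_eq[OF z(1)] by algebra
  finally show ?thesis .
qed

lemma hecke_F_reflect:
  assumes z: "z \<noteq> 0" "norm z < 1" and b: "0 \<le> b"
  shows "hecke_F z b A B = z powi (A - B - (b - 1)) * hecke_F z b (B + (b - 1)) (A - (b - 1))"
proof -
  have "hecke_F z b (B + (b - 1)) (A - (b - 1)) = - (z powi (B + b)) * hecke_F z b (A + 1) (B + b)"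
    using hecke_F_shift[OF assms, of "B + (b - 1)" "A - (b - 1)"] hecke_F_swap[OF z(1), of b "A + 1"]
    by simp
  then show ?thesis
    using hecke_F_shift[OF assms, of A B] z(1) by (simp add: power_int_diff field_simps)
qed

lemma hecke_F_involution:
  assumes z: "z \<noteq> 0" "norm z < 1" and b: "0 \<le> b"
  shows "hecke_F z b A B = z powi (- B) * hecke_F z b (b - 1 - A) (- B)"
proof -
  have "hecke_F z b (b - 1 - A) (- B) = - (z powi (1 + A + B)) * hecke_F z b (A + 1) (B + b)"
    using hecke_F_inversion[OF z(1), of b "b - 1 - A" "- B"] by (simp add: add.commute)
  then show ?thesis
    using hecke_F_shift[OF assms, of A B] z(1) by (simp add: power_int_add power_int_minus field_simps)
qed

lemma qpow_add: "qpow \<tau> (a + b) = qpow \<tau> a * qpow \<tau> b"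
  unfolding qpow_def by (simp add: distrib_left distrib_right exp_add)

lemma qpow_of_int: "qpow \<tau> (of_int k) = qpow \<tau> 1 powi k"
  unfolding qpow_def exp_power_int by (simp add: mult_ac)

lemma qpow_nonzero: "qpow \<tau> a \<noteq> 0"
  unfolding qpow_def by simp

lemma norm_qpow_1_less_1:
  assumes "Im \<tau> > 0"
  shows "norm (qpow \<tau> 1) < 1"
proof -
  have "norm (qpow \<tau> 1) = exp (- 2 * pi * Im \<tau>)"
    unfolding qpow_def by (simp add: norm_exp_eq_Re)
  also have "\<dots> < 1"
    using assms pi_gt_zero by simp
  finally show ?thesis .
qed

definition S_exponent :: "nat \<Rightarrow> int \<Rightarrow> int \<Rightarrow> real" where
  "S_exponent N A B = - 1/8 + (of_int (A + B) + 1)\<^sup>2 / (4 * (of_nat N + 2)) - (of_int (A - B))\<^sup>2 / (4 * of_nat N)"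

lemma S_fun_eq_hecke_F:
  "S_fun N (A - B) (A + B) \<tau> = qpow \<tau> (S_exponent N A B) / J1 \<tau> ^ 3 * hecke_F (qpow \<tau> 1) (1 + int N) A B"
proof -
  have "qpow \<tau> (1 + (of_int (A - B) + of_int (A + B)) / 2) = qpow \<tau> 1 powi (1 + A)"
       "qpow \<tau> (1 - (of_int (A - B) - of_int (A + B)) / 2) = qpow \<tau> 1 powi (1 + B)"
    unfolding qpow_of_int[symmetric] by simp_all
  then show ?thesis
    unfolding S_fun_def S_exponent_def hecke_F_def by simp
qed

lemma S_fun_eqI:
  assumes "hecke_F (qpow \<tau> 1) (1 + int N) A B = qpow \<tau> 1 powi k * hecke_F (qpow \<tau> 1) (1 + int N) A' B'"
    and "S_exponent N A' B' = S_exponent N A B + of_int k"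
  shows "S_fun N (A - B) (A + B) \<tau> = S_fun N (A' - B') (A' + B') \<tau>"
  unfolding S_fun_eq_hecke_F assms qpow_add qpow_of_int by simp

lemma S_exponent_swap: "S_exponent N B A = S_exponent N A B"
  unfolding S_exponent_def by (simp add: add.commute power2_commute)

lemma S_exponent_reflect:
  assumes "N > 0"
  shows "S_exponent N (B + int N) (A - int N) = S_exponent N A B + of_int (A - B - int N)"
proof -
  have sum: "B + int N + (A - int N) = A + B"
    by simp
  have diff: "(of_int (B + int N - (A - int N)))\<^sup>2 / (4 * real N) = (of_int (A - B))\<^sup>2 / (4 * real N) - of_int (A - B - int N)"
    using assms by (simp add: field_simps power2_eq_square)
  show ?thesis
    unfolding S_exponent_def sum diff by simp
qed

lemma S_exponent_involution:
  assumes "N > 0"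
  shows "S_exponent N (int N - A) (- B) = S_exponent N A B + of_int (- B)"
proof -
  have sum: "(of_int (int N - A + - B) + 1)\<^sup>2 / (4 * (real N + 2)) = (of_int (A + B) + 1)\<^sup>2 / (4 * (real N + 2)) + (real N - 2 * of_int (A + B)) / 4"
    by (simp add: field_simps power2_eq_square)
  have diff: "(of_int (int N - A - - B))\<^sup>2 / (4 * real N) = (of_int (A - B))\<^sup>2 / (4 * real N) + (real N - 2 * of_int (A - B)) / 4"
    using assms by (simp add: field_simps power2_eq_square)
  show ?thesis
    unfolding S_exponent_def sum diff by (simp add: field_simps)
qed

theorem mainTheorem5:
  fixes N :: nat and m l :: int and \<tau> :: complex
  assumes "N > 0" and "Im \<tau> > 0" and "m mod 2 = l mod 2"
  shows "S_fun N m l \<tau> = S_fun N (- m) l \<tau>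
       \<and> S_fun N m l \<tau> = S_fun N (2 * int N - m) l \<tau>
       \<and> S_fun N m l \<tau> = S_fun N (int N - m) (int N - l) \<tau>"
proof -
  let ?z = "qpow \<tau> 1"
  have z: "?z \<noteq> 0" "norm ?z < 1"
    using qpow_nonzero norm_qpow_1_less_1[OF assms(2)] by auto
  have b: "0 \<le> 1 + int N"
    by simp
  have "m = (m + l) div 2 - (l - m) div 2" "l = (m + l) div 2 + (l - m) div 2"
    using assms(3) by presburger+
  then obtain A B where m: "m = A - B" and l: "l = A + B"
    by blast
  have "S_fun N (A - B) (A + B) \<tau> = S_fun N (B - A) (B + A) \<tau>"
    using hecke_F_swap[OF z(1)] S_exponent_swap by (intro S_fun_eqI[where k=0]) auto
  moreover have "S_fun N (A - B) (A + B) \<tau> = S_fun N ((B + int N) - (A - int N)) ((B + int N) + (A - int N)) \<tau>"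
    using hecke_F_reflect[OF z b, of A B] S_exponent_reflect[OF assms(1)]
    by (intro S_fun_eqI[where k="A - B - int N"]) simp_all
  moreover have "S_fun N (A - B) (A + B) \<tau> = S_fun N ((int N - A) - (- B)) ((int N - A) + (- B)) \<tau>"
    using hecke_F_involution[OF z b, of A B] S_exponent_involution[OF assms(1)]
    by (intro S_fun_eqI[where k="- B"]) simp_all
  ultimately show ?thesis
    unfolding m l by (simp add: algebra_simps)
qed

end
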